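(* Let $G$ be a plane graph containing no $3$-cycle, $4$-cycle and $5$-cycle that are pairwise adjacent, with a $3$-cycle $C_0$, $s\ge1$, a cover $H$ of $G$ with respect to $L(v)=\{1,\dots,s\}$ for all $v$, $F=(f_1,\dots,f_s)$ with $f_i(v)\in\{0,1,2\}$ and $f_1(v)+\cdots+f_s(v)\ge4$ for all $v$, and a DP-$F$-coloring $R_0$ of $C_0$ (with respect to the restriction of $H$) that cannot be extended to a DP-$F$-coloring of $(G,H)$; suppose $|V(G)|$ is minimum among all such counterexamples. Then $G$ has no separating $3$-cycles.
   Context: Two cycles are adjacent if they share an edge. A cycle $C$ of a plane graph is separating if there are vertices of $G$ both inside and outside $C$. A cover $H$ of $G$ w.r.t. $L$ has vertex set $\{(u,c):c\in L(u)\}$, each $\{u\}\times L(u)$ is a clique, for each edge $uv$ the edges between $\{u\}\times L(u)$ and $\{v\}\times L(v)$ form a matching, and there are no such edges for non-adjacent $u,v$. A representative set contains exactly one vertex of each $\{v\}\times L(v)$. A DP-$F$-coloring is a representative set $R$ admitting an ordering in which each $(v,i)\in R$ has fewer than $f_i(v)$ $H$-neighbors among earlier elements of $R$; extending $R_0$ means finding a DP-$F$-coloring of $(G,H)$ containing $R_0$. *)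

theory Defs
  imports "HOL-Analysis.Analysis"
begin

text \<open>Plane graphs: vertices are points of the plane (type complex); every edge
  e = {u,v} (a 2-element set of vertices) is drawn as an arc \<gamma> e from u to v
  (or from v to u); an arc meets V only in its endpoints and two distinct arcs
  meet only in common endpoints.\<close>

definition plane_graph ::
  "complex set \<Rightarrow> complex set set \<Rightarrow> (complex set \<Rightarrow> real \<Rightarrow> complex) \<Rightarrow> bool" where
  "plane_graph V E \<gamma> \<longleftrightarrow>
     finite V \<and>
     (\<forall>e\<in>E. \<exists>u v. e = {u, v} \<and> u \<noteq> v \<and> u \<in> V \<and> v \<in> V \<and> arc (\<gamma> e) \<and>
        ((pathstart (\<gamma> e) = u \<and> pathfinish (\<gamma> e) = v) \<or>
         (pathstart (\<gamma> e) = v \<and> pathfinish (\<gamma> e) = u)) \<and>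
        path_image (\<gamma> e) \<inter> V = {u, v}) \<and>
     (\<forall>e\<in>E. \<forall>e'\<in>E. e \<noteq> e' \<longrightarrow> path_image (\<gamma> e) \<inter> path_image (\<gamma> e') \<subseteq> e \<inter> e')"

definition cycle_edges :: "'a list \<Rightarrow> 'a set set" where
  "cycle_edges C = {{C ! i, C ! ((i + 1) mod length C)} | i. i < length C}"

definition is_cycle :: "'a set \<Rightarrow> 'a set set \<Rightarrow> 'a list \<Rightarrow> bool" where
  "is_cycle V E C \<longleftrightarrow> length C \<ge> 3 \<and> distinct C \<and> set C \<subseteq> V \<and> cycle_edges C \<subseteq> E"

definition adjacent_cycles :: "'a list \<Rightarrow> 'a list \<Rightarrow> bool" where
  "adjacent_cycles C D \<longleftrightarrow> cycle_edges C \<inter> cycle_edges D \<noteq> {}"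

definition no_adjacent_345 :: "'a set \<Rightarrow> 'a set set \<Rightarrow> bool" where
  "no_adjacent_345 V E \<longleftrightarrow>
     \<not> (\<exists>C3 C4 C5. is_cycle V E C3 \<and> length C3 = 3 \<and> is_cycle V E C4 \<and> length C4 = 4 \<and>
          is_cycle V E C5 \<and> length C5 = 5 \<and>
          adjacent_cycles C3 C4 \<and> adjacent_cycles C3 C5 \<and> adjacent_cycles C4 C5)"

definition cycle_curve :: "(complex set \<Rightarrow> real \<Rightarrow> complex) \<Rightarrow> complex list \<Rightarrow> complex set" where
  "cycle_curve \<gamma> C = (\<Union>e\<in>cycle_edges C. path_image (\<gamma> e))"

definition separating_cycle ::
  "complex set \<Rightarrow> (complex set \<Rightarrow> real \<Rightarrow> complex) \<Rightarrow> complex list \<Rightarrow> bool" where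
  "separating_cycle V \<gamma> C \<longleftrightarrow>
     V \<inter> inside (cycle_curve \<gamma> C) \<noteq> {} \<and> V \<inter> outside (cycle_curve \<gamma> C) \<noteq> {}"

text \<open>Covers (DP-colouring): H is a simple graph (symmetric irreflexive relation)
  on vertex set {(u,c). c \<in> L u}.\<close>

definition is_cover ::
  "'a set \<Rightarrow> 'a set set \<Rightarrow> ('a \<Rightarrow> 'c set) \<Rightarrow> ('a \<times> 'c \<Rightarrow> 'a \<times> 'c \<Rightarrow> bool) \<Rightarrow> bool" where
  "is_cover V E L H \<longleftrightarrow>
     (\<forall>x y. H x y \<longrightarrow> x \<in> Sigma V L \<and> y \<in> Sigma V L) \<and>
     (\<forall>x y. H x y \<longrightarrow> H y x) \<and>
     (\<forall>x. \<not> H x x) \<and>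
     (\<forall>u\<in>V. \<forall>c\<in>L u. \<forall>c'\<in>L u. c \<noteq> c' \<longrightarrow> H (u, c) (u, c')) \<and>
     (\<forall>u\<in>V. \<forall>v\<in>V. u \<noteq> v \<longrightarrow>
        (if {u, v} \<in> E then
           (\<forall>c\<in>L u. \<forall>d\<in>L v. \<forall>d'\<in>L v. H (u, c) (v, d) \<and> H (u, c) (v, d') \<longrightarrow> d = d') \<and>
           (\<forall>c\<in>L u. \<forall>c'\<in>L u. \<forall>d\<in>L v. H (u, c) (v, d) \<and> H (u, c') (v, d) \<longrightarrow> c = c')
         else (\<forall>c\<in>L u. \<forall>d\<in>L v. \<not> H (u, c) (v, d))))"

definition representative_set :: "'a set \<Rightarrow> ('a \<Rightarrow> 'c set) \<Rightarrow> ('a \<times> 'c) set \<Rightarrow> bool" where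
  "representative_set W L R \<longleftrightarrow> R \<subseteq> Sigma W L \<and> (\<forall>v\<in>W. \<exists>!c. (v, c) \<in> R)"

text \<open>DP-F-colouring of the vertex set W (w.r.t. H restricted to W); F is given as
  f i v = f_i(v).\<close>

definition dp_F_coloring ::
  "'a set \<Rightarrow> ('a \<Rightarrow> 'c set) \<Rightarrow> ('a \<times> 'c \<Rightarrow> 'a \<times> 'c \<Rightarrow> bool) \<Rightarrow> ('c \<Rightarrow> 'a \<Rightarrow> nat)
     \<Rightarrow> ('a \<times> 'c) set \<Rightarrow> bool" where
  "dp_F_coloring W L H f R \<longleftrightarrow> representative_set W L R \<and>
     (\<exists>xs. distinct xs \<and> set xs = R \<and>
        (\<forall>j < length xs. card {k. k < j \<and> H (xs ! k) (xs ! j)} < f (snd (xs ! j)) (fst (xs ! j))))"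

definition counterexample ::
  "complex set \<Rightarrow> complex set set \<Rightarrow> (complex set \<Rightarrow> real \<Rightarrow> complex) \<Rightarrow> complex list \<Rightarrow> nat
    \<Rightarrow> (complex \<times> nat \<Rightarrow> complex \<times> nat \<Rightarrow> bool) \<Rightarrow> (nat \<Rightarrow> complex \<Rightarrow> nat)
    \<Rightarrow> (complex \<times> nat) set \<Rightarrow> bool" where
  "counterexample V E \<gamma> C0 s H f R0 \<longleftrightarrow>
     plane_graph V E \<gamma> \<and> no_adjacent_345 V E \<and>
     is_cycle V E C0 \<and> length C0 = 3 \<and>
     s \<ge> 1 \<and> is_cover V E (\<lambda>_. {1..s}) H \<and>
     (\<forall>v\<in>V. \<forall>i\<in>{1..s}. f i v \<in> {0, 1, 2}) \<and>
     (\<forall>v\<in>V. (\<Sum>i = 1..s. f i v) \<ge> 4) \<and>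
     dp_F_coloring (set C0) (\<lambda>_. {1..s}) H f R0 \<and>
     \<not> (\<exists>R. dp_F_coloring V (\<lambda>_. {1..s}) H f R \<and> R0 \<subseteq> R)"

end

theory Submission
  imports Defs
begin

(* Let C be a separating triangle, with vertices I inside and O outside its curve. An edge from
   I to O would be an arc avoiding the curve, so there is none; say the precoloured triangle C0
   lies in C \<union> I. By minimality R0 extends to G[C \<union> I], giving colours p1, p2, p3 to the
   vertices of C. On G[C \<union> O] take the cover in which the only edges between fibres of C form
   the path p1 p2 p3, give p1 weight 1 and all other colours on C weight 2, and add a colour
   s + 1 of weight 0 off C (so the weight sum at the first vertex of C is 2 s + 1 \<ge> 4).
   By minimality {p1, p2, p3} extends to G[C \<union> O]. The weights force p1, p2, p3 to precede
   all their other neighbours in the degenerate order, so the order on C \<union> I followed by the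
   order restricted to O is a degenerate order of G extending R0: a contradiction. *)

section \<open>Degenerate orders\<close>

definition preceding :: "'x list \<Rightarrow> 'x \<Rightarrow> 'x set" where
  "preceding xs x = set (takeWhile (\<lambda>y. y \<noteq> x) xs)"

definition degenerate_order :: "('x \<Rightarrow> 'x \<Rightarrow> bool) \<Rightarrow> ('x \<Rightarrow> nat) \<Rightarrow> 'x list \<Rightarrow> bool" where
  "degenerate_order H w xs \<longleftrightarrow>
     distinct xs \<and> (\<forall>x\<in>set xs. card {y \<in> preceding xs x. H y x} < w x)"

lemma preceding_append_Cons:
  assumes "x \<notin> set ys"
  shows "preceding (ys @ x # zs) x = set ys"
proof -
  have "takeWhile (\<lambda>y. y \<noteq> x) (ys @ x # zs) = ys"
    using assms by (subst takeWhile_append2) auto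
  then show ?thesis by (simp add: preceding_def)
qed

lemma preceding_nth:
  assumes "distinct xs" "j < length xs"
  shows "preceding xs (xs ! j) = set (take j xs)"
proof -
  have "xs ! j \<notin> set (take j xs)"
    using assms by (auto simp: in_set_conv_nth nth_eq_iff_index_eq)
  then have "preceding (take j xs @ xs ! j # drop (Suc j) xs) (xs ! j) = set (take j xs)"
    by (rule preceding_append_Cons)
  then show ?thesis
    using assms(2) by (simp add: id_take_nth_drop[symmetric])
qed

lemma preceding_subset: "preceding xs x \<subseteq> set xs"
  by (auto simp: preceding_def dest: set_takeWhileD)

lemma finite_preceding [simp]: "finite {y \<in> preceding xs x. P y}"
  by (simp add: preceding_def)

lemma preceding_total:
  assumes "distinct xs" "x \<in> set xs" "y \<in> set xs" "x \<noteq> y"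
  shows "y \<in> preceding xs x \<or> x \<in> preceding xs y"
proof -
  obtain ys zs where xs: "xs = ys @ x # zs"
    using assms(2) by (meson split_list)
  show ?thesis
  proof (cases "y \<in> set ys")
    case True
    moreover have "x \<notin> set ys" using assms(1) xs by simp
    ultimately show ?thesis using xs by (simp add: preceding_append_Cons)
  next
    case False
    then have "y \<in> set zs" using assms(3,4) xs by simp
    then obtain us vs where "zs = us @ y # vs"
      by (meson split_list)
    then have xs': "xs = (ys @ x # us) @ y # vs" and notin: "y \<notin> set (ys @ x # us)"
      using xs assms(1) by auto
    have "x \<in> preceding ((ys @ x # us) @ y # vs) y"
      using preceding_append_Cons[OF notin] by simp
    then show ?thesis using xs' by blast
  qed
qed

lemma preceding_append_left:
  assumes "x \<in> set xs"
  shows "preceding (xs @ ys) x = preceding xs x"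
  unfolding preceding_def using assms by (subst takeWhile_append1) auto

lemma takeWhile_neq_filter:
  "P x \<Longrightarrow> takeWhile (\<lambda>y. y \<noteq> x) (filter P ys) = filter P (takeWhile (\<lambda>y. y \<noteq> x) ys)"
proof (induction ys)
  case (Cons a ys)
  then show ?case by (cases "a = x"; cases "P a") simp_all
qed simp

lemma preceding_append_filter:
  assumes "P x" "x \<notin> set xs"
  shows "preceding (xs @ filter P ys) x = set xs \<union> {y \<in> preceding ys x. P y}"
proof -
  have "takeWhile (\<lambda>y. y \<noteq> x) (xs @ filter P ys) = xs @ takeWhile (\<lambda>y. y \<noteq> x) (filter P ys)"
    using assms(2) by (subst takeWhile_append2) auto
  then show ?thesis by (auto simp: preceding_def takeWhile_neq_filter[of P x, OF assms(1)])
qed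

lemma card_earlier_indices:
  assumes "distinct xs" "j < length xs"
  shows "card {k. k < j \<and> H (xs ! k) (xs ! j)} = card {y \<in> set (take j xs). H y (xs ! j)}"
proof -
  have "{y \<in> set (take j xs). H y (xs ! j)} = (!) xs ` {k. k < j \<and> H (xs ! k) (xs ! j)}"
    using assms(2) by (auto simp: in_set_conv_nth)
  moreover have "inj_on ((!) xs) {k. k < j \<and> H (xs ! k) (xs ! j)}"
    using inj_on_nth[OF assms(1)] assms(2) by (auto intro: inj_on_subset)
  ultimately show ?thesis by (simp add: card_image)
qed

lemma dp_F_coloring_iff_degenerate_order:
  "dp_F_coloring W L H f R \<longleftrightarrow>
     representative_set W L R \<and> (\<exists>xs. set xs = R \<and> degenerate_order H (\<lambda>x. f (snd x) (fst x)) xs)"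
proof -
  have "(\<forall>j < length xs. card {k. k < j \<and> H (xs ! k) (xs ! j)} < f (snd (xs ! j)) (fst (xs ! j)))
      \<longleftrightarrow> (\<forall>x\<in>set xs. card {y \<in> preceding xs x. H y x} < f (snd x) (fst x))" if "distinct xs" for xs
  proof -
    have "card {k. k < j \<and> H (xs ! k) (xs ! j)} = card {y \<in> preceding xs (xs ! j). H y (xs ! j)}"
      if "j < length xs" for j
      using card_earlier_indices[OF \<open>distinct xs\<close> that] preceding_nth[OF \<open>distinct xs\<close> that] by simp
    then show ?thesis unfolding all_set_conv_all_nth by simp
  qed
  then show ?thesis
    unfolding dp_F_coloring_def degenerate_order_def by blast
qed

lemma degenerate_order_mono:
  assumes "degenerate_order H w xs"
    and "\<And>x y. x \<in> set xs \<Longrightarrow> y \<in> set xs \<Longrightarrow> H' y x \<Longrightarrow> H y x"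
  shows "degenerate_order H' w xs"
  unfolding degenerate_order_def
proof (intro conjI ballI)
  show "distinct xs" using assms(1) by (simp add: degenerate_order_def)
next
  fix x assume x: "x \<in> set xs"
  have "H y x" if "y \<in> preceding xs x" "H' y x" for y
    using assms(2)[OF x subsetD[OF preceding_subset that(1)] that(2)] .
  then have "{y \<in> preceding xs x. H' y x} \<subseteq> {y \<in> preceding xs x. H y x}"
    by blast
  then have "card {y \<in> preceding xs x. H' y x} \<le> card {y \<in> preceding xs x. H y x}"
    by (intro card_mono) auto
  also have "\<dots> < w x"
    using assms(1) x by (simp add: degenerate_order_def)
  finally show "card {y \<in> preceding xs x. H' y x} < w x" .
qed

lemma degenerate_order_weight_pos:
  assumes "degenerate_order H w xs" "x \<in> set xs"
  shows "0 < w x"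
proof -
  have "card {y \<in> preceding xs x. H y x} < w x"
    using assms by (simp add: degenerate_order_def)
  then show ?thesis by linarith
qed

lemma degenerate_order_no_earlier_neighbour:
  assumes "degenerate_order H w xs" "x \<in> set xs" "w x \<le> 1" "y \<in> preceding xs x"
  shows "\<not> H y x"
proof
  assume "H y x"
  then have "0 < card {y \<in> preceding xs x. H y x}"
    using assms(4) by (auto simp: card_gt_0_iff)
  moreover have "card {y \<in> preceding xs x. H y x} < w x"
    using assms(1,2) by (simp add: degenerate_order_def)
  ultimately show False using assms(3) by linarith
qed

lemma degenerate_order_unique_earlier_neighbour:
  assumes "degenerate_order H w xs" "x \<in> set xs" "w x \<le> 2"
    and "y \<in> preceding xs x" "H y x" "z \<in> preceding xs x" "H z x"
  shows "y = z"
proof (rule ccontr)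
  assume "y \<noteq> z"
  then have "card {y, z} \<le> card {y \<in> preceding xs x. H y x}"
    using assms(4-7) by (intro card_mono) auto
  moreover have "card {y \<in> preceding xs x. H y x} < w x"
    using assms(1,2) by (simp add: degenerate_order_def)
  ultimately show False using \<open>y \<noteq> z\<close> assms(3) by simp
qed

lemma degenerate_order_path_precedes:
  assumes ord: "degenerate_order H w xs"
    and path: "H p1 p2" "H p2 p1" "H p2 p3" "H p3 p2"
    and mem: "p1 \<in> set xs" "p2 \<in> set xs" "p3 \<in> set xs"
    and ne: "p1 \<noteq> p2" "p1 \<noteq> p3" "p2 \<noteq> p3"
    and weights: "w p1 \<le> 1" "w p2 \<le> 2" "w p3 \<le> 2"
    and x: "x \<in> set xs" "x \<notin> {p1, p2, p3}"
    and y: "y \<in> {p1, p2, p3}" "H x y"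
  shows "y \<in> preceding xs x"
proof -
  have dist: "distinct xs" using ord by (simp add: degenerate_order_def)
  have first: "\<not> H z p1" if "z \<in> preceding xs p1" for z
    using degenerate_order_no_earlier_neighbour[OF ord mem(1) weights(1) that] .
  have "p1 \<in> preceding xs p2"
    using preceding_total[OF dist mem(2,1)] first path(2) ne(1) by blast
  then have second: "z = p1" if "z \<in> preceding xs p2" "H z p2" for z
    using degenerate_order_unique_earlier_neighbour[OF ord mem(2) weights(2)] that path(1) by blast
  have "p2 \<in> preceding xs p3"
    using preceding_total[OF dist mem(3,2)] second path(4) ne by blast
  then have third: "z = p2" if "z \<in> preceding xs p3" "H z p3" for z
    using degenerate_order_unique_earlier_neighbour[OF ord mem(3) weights(3)] that path(3) by blast
  have "x \<notin> preceding xs y"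
    using x y first second third by auto
  moreover have "y \<in> set xs" "x \<noteq> y" using y(1) x(2) mem by auto
  ultimately show ?thesis
    using preceding_total[OF dist x(1)] by blast
qed

lemma degenerate_order_append_filter:
  assumes xs: "degenerate_order H w xs" and ys: "degenerate_order H' w' ys"
    and disjoint: "\<And>x. x \<in> set xs \<Longrightarrow> \<not> P x"
    and earlier: "\<And>x y. x \<in> set ys \<Longrightarrow> P x \<Longrightarrow> y \<in> set xs \<Longrightarrow> H y x \<Longrightarrow>
      y \<in> preceding ys x \<and> H' y x"
    and agree: "\<And>x y. x \<in> set ys \<Longrightarrow> P x \<Longrightarrow> y \<in> preceding ys x \<Longrightarrow> P y \<Longrightarrow> H y x \<Longrightarrow> H' y x"
    and weight: "\<And>x. x \<in> set ys \<Longrightarrow> P x \<Longrightarrow> w' x \<le> w x"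
  shows "degenerate_order H w (xs @ filter P ys)"
  unfolding degenerate_order_def
proof (intro conjI ballI)
  show "distinct (xs @ filter P ys)"
    using xs ys disjoint by (auto simp: degenerate_order_def)
next
  fix x assume "x \<in> set (xs @ filter P ys)"
  then consider "x \<in> set xs" | "x \<in> set ys" "P x" by auto
  then show "card {y \<in> preceding (xs @ filter P ys) x. H y x} < w x"
  proof cases
    case 1
    then show ?thesis
      using xs by (simp add: preceding_append_left degenerate_order_def)
  next
    case 2
    then have "x \<notin> set xs" using disjoint by blast
    then have "{y \<in> preceding (xs @ filter P ys) x. H y x} \<subseteq> {y \<in> preceding ys x. H' y x}"
      using 2 earlier agree by (auto simp: preceding_append_filter)
    then have "card {y \<in> preceding (xs @ filter P ys) x. H y x} \<le> card {y \<in> preceding ys x. H' y x}"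
      by (intro card_mono) simp_all
    also have "\<dots> < w' x"
      using ys 2(1) by (simp add: degenerate_order_def)
    also have "\<dots> \<le> w x"
      using weight 2 .
    finally show ?thesis .
  qed
qed

section \<open>Cycles and plane graphs\<close>

lemma cycle_edges_triangle: "cycle_edges [x, y, z] = {{x, y}, {y, z}, {z, x}}"
proof -
  have "cycle_edges [x, y, z] = (\<lambda>i. {[x, y, z] ! i, [x, y, z] ! ((i + 1) mod 3)}) ` {..<3}"
    unfolding cycle_edges_def by auto
  also have "{..<3::nat} = {0, 1, 2}"
    by auto
  finally show ?thesis by simp
qed

lemma cycle_edge_subset:
  assumes "e \<in> cycle_edges C"
  shows "e \<subseteq> set C"
proof -
  obtain i where i: "i < length C" "e = {C ! i, C ! ((i + 1) mod length C)}"
    using assms unfolding cycle_edges_def by blast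
  then have "(i + 1) mod length C < length C"
    by (intro mod_less_divisor) linarith
  then show ?thesis using i by simp
qed

lemma triangle_adjacent:
  assumes "is_cycle V E C" "length C = 3" "u \<in> set C" "v \<in> set C" "u \<noteq> v"
  shows "{u, v} \<in> E"
proof -
  obtain x y z where "C = [x, y, z]"
    using assms(2) by (auto simp: numeral_3_eq_3 length_Suc_conv)
  then show ?thesis
    using assms unfolding is_cycle_def by (auto simp: cycle_edges_triangle insert_commute)
qed

definition induced_edges :: "'a set set \<Rightarrow> 'a set \<Rightarrow> 'a set set" where
  "induced_edges E W = {e \<in> E. e \<subseteq> W}"

lemma is_cycle_induced:
  "is_cycle V E C \<Longrightarrow> set C \<subseteq> W \<Longrightarrow> is_cycle W (induced_edges E W) C"
  unfolding is_cycle_def induced_edges_def using cycle_edge_subset by fastforce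

lemma is_cycle_of_induced:
  "is_cycle W (induced_edges E W) C \<Longrightarrow> W \<subseteq> V \<Longrightarrow> is_cycle V E C"
  unfolding is_cycle_def induced_edges_def by auto

lemma no_adjacent_345_induced:
  assumes "no_adjacent_345 V E" "W \<subseteq> V"
  shows "no_adjacent_345 W (induced_edges E W)"
  using assms is_cycle_of_induced unfolding no_adjacent_345_def by meson

lemma plane_graph_induced:
  assumes "plane_graph V E \<gamma>" "W \<subseteq> V"
  shows "plane_graph W (induced_edges E W) \<gamma>"
  unfolding plane_graph_def
proof (intro conjI ballI impI)
  show "finite W"
    using assms finite_subset unfolding plane_graph_def by blast
next
  fix e assume "e \<in> induced_edges E W"
  then have e: "e \<in> E" "e \<subseteq> W" by (auto simp: induced_edges_def)
  then obtain u v where uv: "e = {u, v}" "u \<noteq> v" "arc (\<gamma> e)"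
      "(pathstart (\<gamma> e) = u \<and> pathfinish (\<gamma> e) = v) \<or> (pathstart (\<gamma> e) = v \<and> pathfinish (\<gamma> e) = u)"
      "path_image (\<gamma> e) \<inter> V = {u, v}"
    using assms(1) unfolding plane_graph_def by meson
  moreover have "path_image (\<gamma> e) \<inter> W = {u, v}"
    using uv(1,5) e(2) assms(2) by blast
  ultimately show "\<exists>u v. e = {u, v} \<and> u \<noteq> v \<and> u \<in> W \<and> v \<in> W \<and> arc (\<gamma> e) \<and>
      (pathstart (\<gamma> e) = u \<and> pathfinish (\<gamma> e) = v \<or> pathstart (\<gamma> e) = v \<and> pathfinish (\<gamma> e) = u) \<and>
      path_image (\<gamma> e) \<inter> W = {u, v}"
    using e(2) by blast
next
  fix e e' assume "e \<in> induced_edges E W" "e' \<in> induced_edges E W" "e \<noteq> e'"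
  then show "path_image (\<gamma> e) \<inter> path_image (\<gamma> e') \<subseteq> e \<inter> e'"
    using assms(1) unfolding plane_graph_def induced_edges_def by blast
qed

lemma plane_graph_edge:
  assumes "plane_graph V E \<gamma>" "e \<in> E"
  shows "path_image (\<gamma> e) \<inter> V = e" "connected (path_image (\<gamma> e))"
  using assms unfolding plane_graph_def
  by (auto intro!: connected_path_image arc_imp_path)

lemma plane_graph_edges_cross:
  assumes "plane_graph V E \<gamma>" "e \<in> E" "e' \<in> E" "e \<noteq> e'"
  shows "path_image (\<gamma> e) \<inter> path_image (\<gamma> e') \<subseteq> e \<inter> e'"
  using assms unfolding plane_graph_def by blast

lemma cycle_curve_vertices:
  assumes "plane_graph V E \<gamma>" "is_cycle V E C"
  shows "V \<inter> cycle_curve \<gamma> C = set C"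
proof -
  have "path_image (\<gamma> e) \<inter> V = e" if "e \<in> cycle_edges C" for e
    using plane_graph_edge(1)[OF assms(1)] assms(2) that unfolding is_cycle_def by blast
  then have "V \<inter> cycle_curve \<gamma> C = \<Union>(cycle_edges C)"
    unfolding cycle_curve_def by blast
  also have "\<dots> = set C"
  proof
    show "\<Union>(cycle_edges C) \<subseteq> set C"
      using cycle_edge_subset by blast
  next
    show "set C \<subseteq> \<Union>(cycle_edges C)"
    proof
      fix v assume "v \<in> set C"
      then obtain i where "i < length C" "v = C ! i"
        by (metis in_set_conv_nth)
      then show "v \<in> \<Union>(cycle_edges C)"
        unfolding cycle_edges_def by blast
    qed
  qed
  finally show ?thesis .
qed

lemma plane_graph_no_edge_across_cycle:
  assumes pg: "plane_graph V E \<gamma>" and C: "is_cycle V E C"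
    and u: "u \<in> inside (cycle_curve \<gamma> C)" and w: "w \<in> outside (cycle_curve \<gamma> C)"
  shows "{u, w} \<notin> E"
proof
  let ?K = "cycle_curve \<gamma> C"
  assume e: "{u, w} \<in> E"
  then have "{u, w} \<subseteq> V"
    using plane_graph_edge(1)[OF pg] by blast
  moreover have "u \<notin> ?K" "w \<notin> ?K"
    using u w inside_Un_outside[of ?K] by blast+
  ultimately have off_cycle: "u \<notin> set C" "w \<notin> set C"
    using cycle_curve_vertices[OF pg C] by blast+
  have "path_image (\<gamma> {u, w}) \<inter> path_image (\<gamma> e') = {}" if e': "e' \<in> cycle_edges C" for e'
  proof -
    have "e' \<in> E" "e' \<subseteq> set C"
      using e' C cycle_edge_subset unfolding is_cycle_def by blast+
    then show ?thesis
      using plane_graph_edges_cross[OF pg e, of e'] off_cycle by blast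
  qed
  then have "path_image (\<gamma> {u, w}) \<subseteq> - ?K"
    unfolding cycle_curve_def by blast
  then have "connected_component (- ?K) w u"
    unfolding connected_component_def
    using plane_graph_edge[OF pg e] by blast
  then have "u \<in> outside ?K"
    using outside_same_component w by blast
  then show False
    using u inside_Int_outside by blast
qed

section \<open>Covers\<close>

lemma is_coverI:
  assumes sigma: "\<And>x y. H x y \<Longrightarrow> x \<in> Sigma V L \<and> y \<in> Sigma V L"
    and sym: "\<And>x y. H x y \<Longrightarrow> H y x"
    and irrefl: "\<And>x. \<not> H x x"
    and fibre: "\<And>u c c'. u \<in> V \<Longrightarrow> c \<in> L u \<Longrightarrow> c' \<in> L u \<Longrightarrow> c \<noteq> c' \<Longrightarrow> H (u, c) (u, c')"
    and matching: "\<And>u v c d d'. u \<noteq> v \<Longrightarrow> H (u, c) (v, d) \<Longrightarrow> H (u, c) (v, d') \<Longrightarrow> d = d'"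
    and non_edge: "\<And>u v c d. u \<noteq> v \<Longrightarrow> {u, v} \<notin> E \<Longrightarrow> \<not> H (u, c) (v, d)"
  shows "is_cover V E L H"
proof -
  have "if {u, v} \<in> E then
          (\<forall>c\<in>L u. \<forall>d\<in>L v. \<forall>d'\<in>L v. H (u, c) (v, d) \<and> H (u, c) (v, d') \<longrightarrow> d = d') \<and>
          (\<forall>c\<in>L u. \<forall>c'\<in>L u. \<forall>d\<in>L v. H (u, c) (v, d) \<and> H (u, c') (v, d) \<longrightarrow> c = c')
        else (\<forall>c\<in>L u. \<forall>d\<in>L v. \<not> H (u, c) (v, d))" if "u \<noteq> v" for u v
  proof (cases "{u, v} \<in> E")
    case True
    have "c = c'" if "H (u, c) (v, d)" "H (u, c') (v, d)" for c c' d
      using matching[of v u d c c'] sym that \<open>u \<noteq> v\<close> by blast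
    then show ?thesis
      using True matching[OF that] by (simp only: if_True) blast
  next
    case False
    then show ?thesis using non_edge[OF that] by simp
  qed
  moreover have "\<forall>x y. H x y \<longrightarrow> x \<in> Sigma V L \<and> y \<in> Sigma V L"
    using sigma by blast
  moreover have "\<forall>x y. H x y \<longrightarrow> H y x"
    using sym by blast
  moreover have "\<forall>u\<in>V. \<forall>c\<in>L u. \<forall>c'\<in>L u. c \<noteq> c' \<longrightarrow> H (u, c) (u, c')"
    using fibre by blast
  ultimately show ?thesis
    unfolding is_cover_def using irrefl by blast
qed

lemma
  assumes "is_cover V E L H"
  shows cover_sigma: "H x y \<Longrightarrow> x \<in> Sigma V L \<and> y \<in> Sigma V L"
    and cover_sym: "H x y \<Longrightarrow> H y x"
    and cover_irrefl: "\<not> H x x"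
    and cover_fibre: "u \<in> V \<Longrightarrow> c \<in> L u \<Longrightarrow> c' \<in> L u \<Longrightarrow> c \<noteq> c' \<Longrightarrow> H (u, c) (u, c')"
proof -
  note c = assms[unfolded is_cover_def]
  show "H x y \<Longrightarrow> x \<in> Sigma V L \<and> y \<in> Sigma V L"
    by (rule c[THEN conjunct1, rule_format])
  show "H x y \<Longrightarrow> H y x"
    by (rule c[THEN conjunct2, THEN conjunct1, rule_format])
  show "\<not> H x x"
    by (rule c[THEN conjunct2, THEN conjunct2, THEN conjunct1, rule_format])
  show "u \<in> V \<Longrightarrow> c \<in> L u \<Longrightarrow> c' \<in> L u \<Longrightarrow> c \<noteq> c' \<Longrightarrow> H (u, c) (u, c')"
    by (rule c[THEN conjunct2, THEN conjunct2, THEN conjunct2, THEN conjunct1, rule_format])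
qed

lemma cover_between:
  assumes "is_cover V E L H" "u \<in> V" "v \<in> V" "u \<noteq> v"
  shows "if {u, v} \<in> E then
           (\<forall>c\<in>L u. \<forall>d\<in>L v. \<forall>d'\<in>L v. H (u, c) (v, d) \<and> H (u, c) (v, d') \<longrightarrow> d = d') \<and>
           (\<forall>c\<in>L u. \<forall>c'\<in>L u. \<forall>d\<in>L v. H (u, c) (v, d) \<and> H (u, c') (v, d) \<longrightarrow> c = c')
         else (\<forall>c\<in>L u. \<forall>d\<in>L v. \<not> H (u, c) (v, d))"
  by (rule assms(1)[unfolded is_cover_def, THEN conjunct2, THEN conjunct2, THEN conjunct2,
        THEN conjunct2, rule_format, OF assms(2-4)])

lemma cover_non_edge:
  assumes "is_cover V E L H" "u \<noteq> v" "{u, v} \<notin> E"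
  shows "\<not> H (u, c) (v, d)"
proof
  assume h: "H (u, c) (v, d)"
  then have "u \<in> V" "v \<in> V" "c \<in> L u" "d \<in> L v"
    using cover_sigma[OF assms(1) h] by auto
  then show False
    using cover_between[OF assms(1) \<open>u \<in> V\<close> \<open>v \<in> V\<close> assms(2)] assms(3) h by simp
qed

lemma cover_matching:
  assumes "is_cover V E L H" "u \<noteq> v" "H (u, c) (v, d)" "H (u, c) (v, d')"
  shows "d = d'"
proof -
  have "{u, v} \<in> E"
    using cover_non_edge[OF assms(1,2)] assms(3) by blast
  moreover have "u \<in> V" "v \<in> V" "c \<in> L u" "d \<in> L v" "d' \<in> L v"
    using cover_sigma[OF assms(1) assms(3)] cover_sigma[OF assms(1) assms(4)] by auto
  ultimately show ?thesis
    using cover_between[OF assms(1) \<open>u \<in> V\<close> \<open>v \<in> V\<close> assms(2)] assms(3,4) by simp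
qed

definition restrict_cover ::
  "('a \<times> 'c \<Rightarrow> 'a \<times> 'c \<Rightarrow> bool) \<Rightarrow> 'a set \<Rightarrow> 'a \<times> 'c \<Rightarrow> 'a \<times> 'c \<Rightarrow> bool" where
  "restrict_cover H W x y \<longleftrightarrow> H x y \<and> fst x \<in> W \<and> fst y \<in> W"

lemma is_cover_restrict:
  assumes "is_cover V E L H" "W \<subseteq> V"
  shows "is_cover W (induced_edges E W) L (restrict_cover H W)"
proof (rule is_coverI)
  fix x y assume "restrict_cover H W x y"
  then show "x \<in> Sigma W L \<and> y \<in> Sigma W L"
    using cover_sigma[OF assms(1)] unfolding restrict_cover_def by (cases x, cases y) auto
next
  fix x y assume "restrict_cover H W x y"
  then show "restrict_cover H W y x"
    using cover_sym[OF assms(1)] unfolding restrict_cover_def by blast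
next
  fix x show "\<not> restrict_cover H W x x"
    using cover_irrefl[OF assms(1)] unfolding restrict_cover_def by blast
next
  fix u c c' assume "u \<in> W" "c \<in> L u" "c' \<in> L u" "c \<noteq> c'"
  then show "restrict_cover H W (u, c) (u, c')"
    using cover_fibre[OF assms(1)] assms(2) unfolding restrict_cover_def by auto
next
  fix u v c d d' assume "u \<noteq> v" "restrict_cover H W (u, c) (v, d)" "restrict_cover H W (u, c) (v, d')"
  then show "d = d'"
    using cover_matching[OF assms(1)] unfolding restrict_cover_def by blast
next
  fix u v c d assume "u \<noteq> v" "{u, v} \<notin> induced_edges E W"
  then show "\<not> restrict_cover H W (u, c) (v, d)"
    using cover_non_edge[OF assms(1)] unfolding restrict_cover_def induced_edges_def by auto
qed

lemma dp_F_coloring_cong: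
  assumes "dp_F_coloring W L H f R" "\<And>x y. x \<in> R \<Longrightarrow> y \<in> R \<Longrightarrow> H' x y \<longleftrightarrow> H x y"
  shows "dp_F_coloring W L H' f R"
proof -
  obtain xs where "representative_set W L R" "set xs = R"
      "degenerate_order H (\<lambda>x. f (snd x) (fst x)) xs"
    using assms(1) unfolding dp_F_coloring_iff_degenerate_order by blast
  moreover have "degenerate_order H' (\<lambda>x. f (snd x) (fst x)) xs"
    using degenerate_order_mono[OF calculation(3)] assms(2) calculation(2) by blast
  ultimately show ?thesis
    unfolding dp_F_coloring_iff_degenerate_order by blast
qed

section \<open>Extension problems\<close>

definition extension_problem ::
  "complex set \<Rightarrow> complex set set \<Rightarrow> (complex set \<Rightarrow> real \<Rightarrow> complex) \<Rightarrow> complex list \<Rightarrow> nat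
    \<Rightarrow> (complex \<times> nat \<Rightarrow> complex \<times> nat \<Rightarrow> bool) \<Rightarrow> (nat \<Rightarrow> complex \<Rightarrow> nat)
    \<Rightarrow> (complex \<times> nat) set \<Rightarrow> bool" where
  "extension_problem V E \<gamma> C0 s H f R0 \<longleftrightarrow>
     plane_graph V E \<gamma> \<and> no_adjacent_345 V E \<and>
     is_cycle V E C0 \<and> length C0 = 3 \<and>
     s \<ge> 1 \<and> is_cover V E (\<lambda>_. {1..s}) H \<and>
     (\<forall>v\<in>V. \<forall>i\<in>{1..s}. f i v \<in> {0, 1, 2}) \<and>
     (\<forall>v\<in>V. (\<Sum>i = 1..s. f i v) \<ge> 4) \<and>
     dp_F_coloring (set C0) (\<lambda>_. {1..s}) H f R0"

lemma counterexample_iff_not_extendable: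
  "counterexample V E \<gamma> C0 s H f R0 \<longleftrightarrow>
     extension_problem V E \<gamma> C0 s H f R0 \<and>
     \<not> (\<exists>R. dp_F_coloring V (\<lambda>_. {1..s}) H f R \<and> R0 \<subseteq> R)"
  unfolding counterexample_def extension_problem_def by blast

lemma extension_problemD:
  assumes "extension_problem V E \<gamma> C0 s H f R0"
  shows "plane_graph V E \<gamma>" "no_adjacent_345 V E" "is_cycle V E C0" "length C0 = 3" "1 \<le> s"
    "is_cover V E (\<lambda>_. {1..s}) H" "\<And>v i. v \<in> V \<Longrightarrow> i \<in> {1..s} \<Longrightarrow> f i v \<in> {0, 1, 2}"
    "\<And>v. v \<in> V \<Longrightarrow> 4 \<le> (\<Sum>i = 1..s. f i v)" "dp_F_coloring (set C0) (\<lambda>_. {1..s}) H f R0"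
  using assms unfolding extension_problem_def by blast+

lemma extension_problem_induced:
  assumes "extension_problem V E \<gamma> C0 s H f R0" "set C0 \<subseteq> W" "W \<subseteq> V"
  shows "extension_problem W (induced_edges E W) \<gamma> C0 s (restrict_cover H W) f R0"
proof -
  note prob = extension_problemD[OF assms(1)]
  have "R0 \<subseteq> Sigma (set C0) (\<lambda>_. {1..s})"
    using prob(9) unfolding dp_F_coloring_def representative_set_def by blast
  then have "fst x \<in> W" if "x \<in> R0" for x
    using that assms(2) by (cases x) auto
  then have "restrict_cover H W x y \<longleftrightarrow> H x y" if "x \<in> R0" "y \<in> R0" for x y
    using that unfolding restrict_cover_def by blast
  then have "dp_F_coloring (set C0) (\<lambda>_. {1..s}) (restrict_cover H W) f R0"
    by (rule dp_F_coloring_cong[OF prob(9)])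
  moreover have "plane_graph W (induced_edges E W) \<gamma>"
    by (rule plane_graph_induced[OF prob(1) assms(3)])
  moreover have "no_adjacent_345 W (induced_edges E W)"
    by (rule no_adjacent_345_induced[OF prob(2) assms(3)])
  moreover have "is_cycle W (induced_edges E W) C0"
    by (rule is_cycle_induced[OF prob(3) assms(2)])
  moreover have "is_cover W (induced_edges E W) (\<lambda>_. {1..s}) (restrict_cover H W)"
    by (rule is_cover_restrict[OF prob(6) assms(3)])
  moreover have "\<forall>v\<in>W. \<forall>i\<in>{1..s}. f i v \<in> {0, 1, 2}" "\<forall>v\<in>W. 4 \<le> (\<Sum>i = 1..s. f i v)"
    using prob(7,8) assms(3) by blast+
  ultimately show ?thesis
    using prob(4,5) unfolding extension_problem_def by blast
qed

lemma extension_problem_at_least_two_colours: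
  assumes "extension_problem V E \<gamma> C0 s H f R0"
  shows "2 \<le> s"
proof -
  note P = extension_problemD[OF assms]
  have "C0 ! 0 \<in> V"
    using P(3,4) unfolding is_cycle_def by auto
  then have "4 \<le> (\<Sum>i = 1..s. f i (C0 ! 0))"
    by (rule P(8))
  also have "\<dots> \<le> (\<Sum>i = 1..s. 2)"
  proof (rule sum_mono)
    fix i assume "i \<in> {1..s}"
    then have "f i (C0 ! 0) \<in> {0, 1, 2}"
      by (rule P(7)[OF \<open>C0 ! 0 \<in> V\<close>])
    then show "f i (C0 ! 0) \<le> 2" by auto
  qed
  finally show ?thesis by simp
qed

section \<open>Recolouring across a triangle\<close>

definition triangle_path_cover ::
  "('a \<times> 'c \<Rightarrow> 'a \<times> 'c \<Rightarrow> bool) \<Rightarrow> 'a set \<Rightarrow> ('a \<Rightarrow> 'c set) \<Rightarrow> 'a \<times> 'c \<Rightarrow> 'a \<times> 'c \<Rightarrow> 'a \<times> 'c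
    \<Rightarrow> 'a \<times> 'c \<Rightarrow> 'a \<times> 'c \<Rightarrow> bool" where
  "triangle_path_cover H W L p1 p2 p3 x y \<longleftrightarrow> x \<in> Sigma W L \<and> y \<in> Sigma W L \<and>
     (if fst x = fst y then snd x \<noteq> snd y
      else if fst x \<in> {fst p1, fst p2, fst p3} \<and> fst y \<in> {fst p1, fst p2, fst p3}
      then {x, y} = {p1, p2} \<or> {x, y} = {p2, p3}
      else H x y)"

lemma triangle_path_partner_unique:
  assumes "fst p1 \<noteq> fst p2" "fst p1 \<noteq> fst p3" "fst p2 \<noteq> fst p3"
    and "{x, y} = {p1, p2} \<or> {x, y} = {p2, p3}" "{x, y'} = {p1, p2} \<or> {x, y'} = {p2, p3}"
    and "fst y = fst y'"
  shows "y = y'"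
  using assms by (auto simp: doubleton_eq_iff)

lemma is_cover_triangle_path_cover:
  assumes cover: "is_cover V E L0 H" and W: "W \<subseteq> V" "{fst p1, fst p2, fst p3} \<subseteq> W"
    and distinct: "fst p1 \<noteq> fst p2" "fst p1 \<noteq> fst p3" "fst p2 \<noteq> fst p3"
    and triangle: "\<And>u v. u \<in> {fst p1, fst p2, fst p3} \<Longrightarrow> v \<in> {fst p1, fst p2, fst p3} \<Longrightarrow> u \<noteq> v
      \<Longrightarrow> {u, v} \<in> E"
  shows "is_cover W (induced_edges E W) L (triangle_path_cover H W L p1 p2 p3)"
proof (rule is_coverI)
  fix x y assume "triangle_path_cover H W L p1 p2 p3 x y"
  then show "triangle_path_cover H W L p1 p2 p3 y x"
    using cover_sym[OF cover] unfolding triangle_path_cover_def by (auto simp: insert_commute)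
next
  fix u v c d d'
  assume uv: "u \<noteq> v" and h: "triangle_path_cover H W L p1 p2 p3 (u, c) (v, d)"
    "triangle_path_cover H W L p1 p2 p3 (u, c) (v, d')"
  show "d = d'"
  proof (cases "u \<in> {fst p1, fst p2, fst p3} \<and> v \<in> {fst p1, fst p2, fst p3}")
    case True
    then show ?thesis
      using h uv triangle_path_partner_unique[OF distinct, of "(u, c)" "(v, d)" "(v, d')"]
      unfolding triangle_path_cover_def by auto
  next
    case False
    then show ?thesis
      using h uv cover_matching[OF cover uv] unfolding triangle_path_cover_def by auto
  qed
next
  fix u v c d
  assume uv: "u \<noteq> v" "{u, v} \<notin> induced_edges E W"
  show "\<not> triangle_path_cover H W L p1 p2 p3 (u, c) (v, d)"
  proof
    assume h: "triangle_path_cover H W L p1 p2 p3 (u, c) (v, d)"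
    then have "{u, v} \<notin> E"
      using uv unfolding triangle_path_cover_def induced_edges_def by auto
    show False
    proof (cases "u \<in> {fst p1, fst p2, fst p3} \<and> v \<in> {fst p1, fst p2, fst p3}")
      case True
      then show False using triangle uv(1) \<open>{u, v} \<notin> E\<close> by blast
    next
      case False
      then have "H (u, c) (v, d)"
        using h uv(1) unfolding triangle_path_cover_def by auto
      then show False
        using cover_non_edge[OF cover uv(1) \<open>{u, v} \<notin> E\<close>] by blast
    qed
  qed
qed (auto simp: triangle_path_cover_def)

lemma triangle_path_cover_of_cover:
  assumes "is_cover V E L0 H" "H x y" "x \<in> Sigma W L" "y \<in> Sigma W L"
    and "fst x \<notin> {fst p1, fst p2, fst p3} \<or> fst y \<notin> {fst p1, fst p2, fst p3}"
  shows "triangle_path_cover H W L p1 p2 p3 x y"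
proof -
  have "x \<noteq> y" using cover_irrefl[OF assms(1)] assms(2) by blast
  then show ?thesis
    using assms(2-5) unfolding triangle_path_cover_def by (auto simp: prod_eq_iff)
qed

definition triangle_weights :: "(nat \<Rightarrow> 'a \<Rightarrow> nat) \<Rightarrow> nat \<Rightarrow> 'a set \<Rightarrow> 'a \<times> nat \<Rightarrow> nat \<Rightarrow> 'a \<Rightarrow> nat" where
  "triangle_weights f s T p i v =
     (if v \<in> T then if (v, i) = p then 1 else 2 else if i = s + 1 then 0 else f i v)"

lemma triangle_weights_range:
  assumes "v \<notin> T \<Longrightarrow> i \<in> {1..s} \<Longrightarrow> f i v \<in> {0, 1, 2}" "i \<in> {1..s + 1}"
  shows "triangle_weights f s T p i v \<in> {0, 1, 2}"
proof (cases "v \<notin> T \<and> i \<noteq> s + 1")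
  case True
  then have "f i v \<in> {0, 1, 2}"
    using assms by auto
  then show ?thesis
    using True by (simp add: triangle_weights_def)
qed (auto simp: triangle_weights_def)

lemma sum_triangle_weights_on_triangle:
  assumes "v \<in> T" "2 \<le> s"
  shows "4 \<le> (\<Sum>i = 1..s + 1. triangle_weights f s T p i v)"
proof -
  have "(\<Sum>i = 1..s + 1. 2) \<le> (\<Sum>i = 1..s + 1. triangle_weights f s T p i v + (if i = snd p then 1 else 0))"
    using assms(1) by (intro sum_mono) (auto simp: triangle_weights_def)
  also have "\<dots> \<le> (\<Sum>i = 1..s + 1. triangle_weights f s T p i v) + 1"
    by (simp add: sum.distrib)
  finally show ?thesis using assms(2) by simp
qed

lemma sum_triangle_weights_off_triangle:
  assumes "v \<notin> T"
  shows "(\<Sum>i = 1..s + 1. triangle_weights f s T p i v) = (\<Sum>i = 1..s. f i v)"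
proof -
  have "(\<Sum>i = 1..s + 1. triangle_weights f s T p i v)
      = (\<Sum>i = 1..s. triangle_weights f s T p i v) + triangle_weights f s T p (s + 1) v"
    by simp
  also have "\<dots> = (\<Sum>i = 1..s. f i v)"
    using assms by (simp add: triangle_weights_def)
  finally show ?thesis .
qed

lemma triangle_path_precolouring:
  assumes distinct: "c1 \<noteq> c2" "c1 \<noteq> c3" "c2 \<noteq> c3"
    and colours: "a1 \<in> L c1" "a2 \<in> L c2" "a3 \<in> L c3"
  shows "dp_F_coloring {c1, c2, c3} L (triangle_path_cover H W L (c1, a1) (c2, a2) (c3, a3))
           (triangle_weights f s {c1, c2, c3} (c1, a1)) {(c1, a1), (c2, a2), (c3, a3)}"
proof -
  let ?H = "triangle_path_cover H W L (c1, a1) (c2, a2) (c3, a3)"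
    and ?w = "\<lambda>x. triangle_weights f s {c1, c2, c3} (c1, a1) (snd x) (fst x)"
    and ?xs = "[(c1, a1), (c2, a2), (c3, a3)]"
  have preceding: "preceding ?xs (c1, a1) = {}" "preceding ?xs (c2, a2) = {(c1, a1)}"
      "preceding ?xs (c3, a3) = {(c1, a1), (c2, a2)}"
    using distinct by (simp_all add: preceding_def)
  have weights: "?w (c1, a1) = 1" "?w (c2, a2) = 2" "?w (c3, a3) = 2"
    using distinct by (simp_all add: triangle_weights_def)
  have "\<not> ?H (c1, a1) (c3, a3)"
    using distinct unfolding triangle_path_cover_def by (auto simp: doubleton_eq_iff)
  then have "{y \<in> {(c1, a1), (c2, a2)}. ?H y (c3, a3)} \<subseteq> {(c2, a2)}"
    by blast
  then have "card {y \<in> {(c1, a1), (c2, a2)}. ?H y (c3, a3)} \<le> card {(c2, a2)}"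
    by (rule card_mono[rotated]) simp
  moreover have "card {y \<in> {(c1, a1)}. ?H y (c2, a2)} \<le> card {(c1, a1)}"
    by (rule card_mono) auto
  ultimately have "card {y \<in> preceding ?xs x. ?H y x} < ?w x" if "x \<in> set ?xs" for x
    using that preceding weights by auto
  then have "degenerate_order ?H ?w ?xs"
    using distinct unfolding degenerate_order_def by auto
  moreover have "representative_set {c1, c2, c3} L {(c1, a1), (c2, a2), (c3, a3)}"
    using distinct colours unfolding representative_set_def by auto
  moreover have "set ?xs = {(c1, a1), (c2, a2), (c3, a3)}"
    by simp
  ultimately show ?thesis
    unfolding dp_F_coloring_iff_degenerate_order by blast
qed

lemma extension_problem_triangle_path_cover:
  assumes prob: "extension_problem V E \<gamma> C0 s H f R0"
    and C: "is_cycle V E [c1, c2, c3]" and W: "{c1, c2, c3} \<subseteq> W" "W \<subseteq> V"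
    and colours: "a1 \<in> {1..s + 1}" "a2 \<in> {1..s + 1}" "a3 \<in> {1..s + 1}"
  shows "extension_problem W (induced_edges E W) \<gamma> [c1, c2, c3] (s + 1)
           (triangle_path_cover H W (\<lambda>_. {1..s + 1}) (c1, a1) (c2, a2) (c3, a3))
           (triangle_weights f s {c1, c2, c3} (c1, a1)) {(c1, a1), (c2, a2), (c3, a3)}"
proof -
  note P = extension_problemD[OF prob]
  have distinct: "c1 \<noteq> c2" "c1 \<noteq> c3" "c2 \<noteq> c3"
    using C unfolding is_cycle_def by auto
  have triangle: "{u, v} \<in> E" if "u \<in> {c1, c2, c3}" "v \<in> {c1, c2, c3}" "u \<noteq> v" for u v
    using triangle_adjacent[OF C] that by simp
  have "is_cover W (induced_edges E W) (\<lambda>_. {1..s + 1})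
      (triangle_path_cover H W (\<lambda>_. {1..s + 1}) (c1, a1) (c2, a2) (c3, a3))"
    using W(1) distinct triangle
    by (intro is_cover_triangle_path_cover[OF P(6) W(2)]) simp_all
  moreover have "\<forall>v\<in>W. \<forall>i\<in>{1..s + 1}. triangle_weights f s {c1, c2, c3} (c1, a1) i v \<in> {0, 1, 2}"
  proof (intro ballI)
    fix v i assume v: "v \<in> W" and i: "i \<in> {1..s + 1}"
    have "v \<notin> {c1, c2, c3} \<Longrightarrow> i \<in> {1..s} \<Longrightarrow> f i v \<in> {0, 1, 2}"
      by (rule P(7)[OF subsetD[OF W(2) v]])
    then show "triangle_weights f s {c1, c2, c3} (c1, a1) i v \<in> {0, 1, 2}"
      using i by (rule triangle_weights_range)
  qed
  moreover have "\<forall>v\<in>W. 4 \<le> (\<Sum>i = 1..s + 1. triangle_weights f s {c1, c2, c3} (c1, a1) i v)"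
  proof
    fix v assume v: "v \<in> W"
    show "4 \<le> (\<Sum>i = 1..s + 1. triangle_weights f s {c1, c2, c3} (c1, a1) i v)"
    proof (cases "v \<in> {c1, c2, c3}")
      case True
      then show ?thesis
        by (rule sum_triangle_weights_on_triangle[OF _ extension_problem_at_least_two_colours[OF prob]])
    next
      case False
      show ?thesis
        unfolding sum_triangle_weights_off_triangle[OF False] by (rule P(8)[OF subsetD[OF W(2) v]])
    qed
  qed
  moreover have "dp_F_coloring (set [c1, c2, c3]) (\<lambda>_. {1..s + 1})
      (triangle_path_cover H W (\<lambda>_. {1..s + 1}) (c1, a1) (c2, a2) (c3, a3))
      (triangle_weights f s {c1, c2, c3} (c1, a1)) {(c1, a1), (c2, a2), (c3, a3)}"
    using triangle_path_precolouring[OF distinct] colours by simp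
  moreover have "plane_graph W (induced_edges E W) \<gamma>"
    by (rule plane_graph_induced[OF P(1) W(2)])
  moreover have "no_adjacent_345 W (induced_edges E W)"
    by (rule no_adjacent_345_induced[OF P(2) W(2)])
  moreover have "is_cycle W (induced_edges E W) [c1, c2, c3]"
    using is_cycle_induced[OF C] W(1) by simp
  ultimately show ?thesis
    unfolding extension_problem_def by simp
qed

lemma triangle_path_cover_order_precedes:
  assumes ord: "degenerate_order (triangle_path_cover H W L (c1, a1) (c2, a2) (c3, a3))
      (\<lambda>x. triangle_weights f s {c1, c2, c3} (c1, a1) (snd x) (fst x)) xs"
    and mem: "{(c1, a1), (c2, a2), (c3, a3)} \<subseteq> set xs"
    and sigma: "set xs \<subseteq> Sigma W L"
    and distinct: "c1 \<noteq> c2" "c1 \<noteq> c3" "c2 \<noteq> c3"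
    and x: "x \<in> set xs" "fst x \<notin> {c1, c2, c3}"
    and y: "y \<in> {(c1, a1), (c2, a2), (c3, a3)}" "triangle_path_cover H W L (c1, a1) (c2, a2) (c3, a3) x y"
  shows "y \<in> preceding xs x"
proof (rule degenerate_order_path_precedes[OF ord])
  let ?H = "triangle_path_cover H W L (c1, a1) (c2, a2) (c3, a3)"
  show "?H (c1, a1) (c2, a2)" "?H (c2, a2) (c1, a1)" "?H (c2, a2) (c3, a3)" "?H (c3, a3) (c2, a2)"
    using mem sigma distinct unfolding triangle_path_cover_def by (auto simp: insert_commute)
qed (use mem distinct x y in \<open>auto simp: triangle_weights_def\<close>)

lemma representative_set_glue:
  assumes "representative_set V1 L R1" "representative_set W L' R2"
    and "V1 \<inter> B = {}" "B \<subseteq> W" "\<And>x. x \<in> R2 \<Longrightarrow> fst x \<in> B \<Longrightarrow> snd x \<in> L (fst x)"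
  shows "representative_set (V1 \<union> B) L (R1 \<union> {x \<in> R2. fst x \<in> B})"
  unfolding representative_set_def
proof (intro conjI ballI)
  show "R1 \<union> {x \<in> R2. fst x \<in> B} \<subseteq> Sigma (V1 \<union> B) L"
    using assms(1,5) unfolding representative_set_def by force
next
  fix v assume v: "v \<in> V1 \<union> B"
  have R1: "fst x \<in> V1" if "x \<in> R1" for x
    using assms(1) that unfolding representative_set_def by force
  show "\<exists>!c. (v, c) \<in> R1 \<union> {x \<in> R2. fst x \<in> B}"
  proof (cases "v \<in> V1")
    case True
    then have "(v, c) \<in> R1 \<union> {x \<in> R2. fst x \<in> B} \<longleftrightarrow> (v, c) \<in> R1" for c
      using assms(3) by auto
    then show ?thesis
      using assms(1) True unfolding representative_set_def by simp
  next
    case False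
    then have "(v, c) \<in> R1 \<union> {x \<in> R2. fst x \<in> B} \<longleftrightarrow> (v, c) \<in> R2" for c
      using v R1 by force
    moreover have "v \<in> W"
      using v False assms(4) by blast
    ultimately show ?thesis
      using assms(2) unfolding representative_set_def by simp
  qed
qed

lemma representative_set_unique:
  assumes "representative_set W L R" "x \<in> R" "y \<in> R" "fst x = fst y"
  shows "x = y"
proof -
  have "fst x \<in> W"
    using assms(1,2) unfolding representative_set_def by (cases x) auto
  then have "\<exists>!c. (fst x, c) \<in> R"
    using assms(1) unfolding representative_set_def by blast
  then show ?thesis
    using assms(2-4) by (metis prod.collapse)
qed

lemma triangle_cut_neighbour:
  assumes cover: "is_cover V E L H"
    and rep: "representative_set V1 L1 R1" "{(c1, a1), (c2, a2), (c3, a3)} \<subseteq> R1"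
    and no_edges: "\<And>u w. u \<in> V1 \<Longrightarrow> u \<notin> {c1, c2, c3} \<Longrightarrow> w \<in> B \<Longrightarrow> {u, w} \<notin> E"
    and disjoint: "V1 \<inter> B = {}"
    and y: "y \<in> R1" "H y x" and x: "fst x \<in> B"
  shows "y \<in> {(c1, a1), (c2, a2), (c3, a3)}"
proof -
  have "fst y \<in> V1"
    using rep(1) y(1) unfolding representative_set_def by (cases y) auto
  then have "fst y \<noteq> fst x"
    using x disjoint by auto
  have "fst y \<in> {c1, c2, c3}"
  proof (rule ccontr)
    assume "fst y \<notin> {c1, c2, c3}"
    then have "\<not> H (fst y, snd y) (fst x, snd x)"
      by (rule cover_non_edge[OF cover \<open>fst y \<noteq> fst x\<close> no_edges[OF \<open>fst y \<in> V1\<close> _ x]])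
    then show False
      using y(2) by simp
  qed
  moreover have "y = (c, a)" if "(c, a) \<in> {(c1, a1), (c2, a2), (c3, a3)}" "fst y = c" for c a
    using representative_set_unique[OF rep(1) y(1), of "(c, a)"] rep(2) that by auto
  ultimately show ?thesis
    by auto
qed

lemma degenerate_order_triangle_weights_off_triangle:
  assumes "degenerate_order H (\<lambda>x. triangle_weights f s T p (snd x) (fst x)) xs" "x \<in> set xs"
    and "fst x \<notin> T" "snd x \<in> {1..s + 1}"
  shows "snd x \<in> {1..s} \<and> triangle_weights f s T p (snd x) (fst x) = f (snd x) (fst x)"
  using degenerate_order_weight_pos[OF assms(1,2)] assms(3,4) by (auto simp: triangle_weights_def)

lemma degenerate_order_glue_across_triangle:
  assumes cover: "is_cover V E (\<lambda>_. {1..s}) H"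
    and distinct: "c1 \<noteq> c2" "c1 \<noteq> c3" "c2 \<noteq> c3"
    and parts: "V1 \<inter> B = {}" "{c1, c2, c3} \<subseteq> V1"
    and no_edges: "\<And>u w. u \<in> V1 \<Longrightarrow> u \<notin> {c1, c2, c3} \<Longrightarrow> w \<in> B \<Longrightarrow> {u, w} \<notin> E"
    and rep1: "representative_set V1 L1 (set xs1)" "{(c1, a1), (c2, a2), (c3, a3)} \<subseteq> set xs1"
    and ord1: "degenerate_order H (\<lambda>x. f (snd x) (fst x)) xs1"
    and sigma2: "set xs2 \<subseteq> Sigma ({c1, c2, c3} \<union> B) (\<lambda>_. {1..s + 1})"
      "{(c1, a1), (c2, a2), (c3, a3)} \<subseteq> set xs2"
    and ord2: "degenerate_order
        (triangle_path_cover H ({c1, c2, c3} \<union> B) (\<lambda>_. {1..s + 1}) (c1, a1) (c2, a2) (c3, a3))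
        (\<lambda>x. triangle_weights f s {c1, c2, c3} (c1, a1) (snd x) (fst x)) xs2"
  shows "degenerate_order H (\<lambda>x. f (snd x) (fst x)) (xs1 @ filter (\<lambda>x. fst x \<in> B) xs2)"
proof (rule degenerate_order_append_filter[OF ord1 ord2])
  show "fst x \<notin> B" if "x \<in> set xs1" for x
    using rep1(1) that parts(1) unfolding representative_set_def by (cases x) auto
next
  fix x y assume x: "x \<in> set xs2" "fst x \<in> B" and y: "y \<in> set xs1" "H y x"
  let ?H2 = "triangle_path_cover H ({c1, c2, c3} \<union> B) (\<lambda>_. {1..s + 1}) (c1, a1) (c2, a2) (c3, a3)"
  have off_triangle: "fst x \<notin> {c1, c2, c3}"
    using x(2) parts by auto
  have "y \<in> {(c1, a1), (c2, a2), (c3, a3)}"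
    using triangle_cut_neighbour[OF cover rep1 no_edges parts(1) y x(2)] .
  then have "y \<in> set xs2"
    by (rule subsetD[OF sigma2(2)])
  then have sigma: "y \<in> Sigma ({c1, c2, c3} \<union> B) (\<lambda>_. {1..s + 1})"
      "x \<in> Sigma ({c1, c2, c3} \<union> B) (\<lambda>_. {1..s + 1})"
    using sigma2(1) x(1) by (blast, blast)
  have "?H2 x y"
    using triangle_path_cover_of_cover[OF cover cover_sym[OF cover y(2)] sigma(2,1)] off_triangle
    by simp
  then have "y \<in> preceding xs2 x"
    using triangle_path_cover_order_precedes[OF ord2 sigma2(2) sigma2(1) distinct x(1) off_triangle
        \<open>y \<in> {(c1, a1), (c2, a2), (c3, a3)}\<close>] by blast
  moreover have "?H2 y x"
    using triangle_path_cover_of_cover[OF cover y(2) sigma] off_triangle by simp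
  ultimately show "y \<in> preceding xs2 x \<and> ?H2 y x" ..
next
  fix x y assume x: "x \<in> set xs2" "fst x \<in> B" and y: "y \<in> preceding xs2 x" "fst y \<in> B" "H y x"
  have "y \<in> set xs2"
    using y(1) preceding_subset[of xs2 x] by blast
  then have sigma: "y \<in> Sigma ({c1, c2, c3} \<union> B) (\<lambda>_. {1..s + 1})"
    "x \<in> Sigma ({c1, c2, c3} \<union> B) (\<lambda>_. {1..s + 1})"
    using sigma2(1) x(1) by (blast, blast)
  have "fst x \<notin> {c1, c2, c3}"
    using x(2) parts by auto
  then show "triangle_path_cover H ({c1, c2, c3} \<union> B) (\<lambda>_. {1..s + 1}) (c1, a1) (c2, a2) (c3, a3) y x"
    by (intro triangle_path_cover_of_cover[OF cover y(3) sigma]) simp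
next
  fix x assume x: "x \<in> set xs2" "fst x \<in> B"
  then have "fst x \<notin> {c1, c2, c3}" "snd x \<in> {1..s + 1}"
    using parts sigma2(1) by (auto simp: mem_Times_iff)
  then show "triangle_weights f s {c1, c2, c3} (c1, a1) (snd x) (fst x) \<le> f (snd x) (fst x)"
    using degenerate_order_triangle_weights_off_triangle[OF ord2 x(1)] by simp
qed

lemma dp_F_coloring_glue_across_triangle:
  assumes cover: "is_cover V E (\<lambda>_. {1..s}) H"
    and distinct: "c1 \<noteq> c2" "c1 \<noteq> c3" "c2 \<noteq> c3"
    and parts: "V = V1 \<union> B" "V1 \<inter> B = {}" "{c1, c2, c3} \<subseteq> V1"
    and no_edges: "\<And>u w. u \<in> V1 \<Longrightarrow> u \<notin> {c1, c2, c3} \<Longrightarrow> w \<in> B \<Longrightarrow> {u, w} \<notin> E"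
    and R1: "dp_F_coloring V1 (\<lambda>_. {1..s}) (restrict_cover H V1) f R1"
      "{(c1, a1), (c2, a2), (c3, a3)} \<subseteq> R1"
    and R2: "dp_F_coloring ({c1, c2, c3} \<union> B) (\<lambda>_. {1..s + 1})
        (triangle_path_cover H ({c1, c2, c3} \<union> B) (\<lambda>_. {1..s + 1}) (c1, a1) (c2, a2) (c3, a3))
        (triangle_weights f s {c1, c2, c3} (c1, a1)) R2"
      "{(c1, a1), (c2, a2), (c3, a3)} \<subseteq> R2"
  shows "dp_F_coloring V (\<lambda>_. {1..s}) H f (R1 \<union> {x \<in> R2. fst x \<in> B})"
proof -
  obtain xs1 where rep1: "representative_set V1 (\<lambda>_. {1..s}) R1" and set1: "set xs1 = R1"
      and ord1: "degenerate_order (restrict_cover H V1) (\<lambda>x. f (snd x) (fst x)) xs1"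
    using R1(1) unfolding dp_F_coloring_iff_degenerate_order by blast
  obtain xs2 where rep2: "representative_set ({c1, c2, c3} \<union> B) (\<lambda>_. {1..s + 1}) R2"
      and set2: "set xs2 = R2"
      and ord2: "degenerate_order
        (triangle_path_cover H ({c1, c2, c3} \<union> B) (\<lambda>_. {1..s + 1}) (c1, a1) (c2, a2) (c3, a3))
        (\<lambda>x. triangle_weights f s {c1, c2, c3} (c1, a1) (snd x) (fst x)) xs2"
    using R2(1) unfolding dp_F_coloring_iff_degenerate_order by blast
  have "fst x \<in> V1" if "x \<in> set xs1" for x
    using rep1 that set1 unfolding representative_set_def by (cases x) auto
  then have "degenerate_order H (\<lambda>x. f (snd x) (fst x)) xs1"
    by (intro degenerate_order_mono[OF ord1]) (auto simp: restrict_cover_def)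
  moreover have sigma2: "set xs2 \<subseteq> Sigma ({c1, c2, c3} \<union> B) (\<lambda>_. {1..s + 1})"
    using rep2 set2 unfolding representative_set_def by blast
  ultimately have "degenerate_order H (\<lambda>x. f (snd x) (fst x)) (xs1 @ filter (\<lambda>x. fst x \<in> B) xs2)"
    using R1(2) R2(2) rep1 set1 set2
    by (intro degenerate_order_glue_across_triangle[OF cover distinct parts(2,3) no_edges _ _ _ _ _ ord2])
      simp_all
  moreover have "snd x \<in> {1..s}" if "x \<in> R2" "fst x \<in> B" for x
  proof -
    have "x \<in> set xs2"
      using that(1) set2 by simp
    moreover have "fst x \<notin> {c1, c2, c3}" "snd x \<in> {1..s + 1}"
      using that sigma2 set2 parts by (auto simp: mem_Times_iff)
    ultimately show ?thesis
      using degenerate_order_triangle_weights_off_triangle[OF ord2] by blast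
  qed
  then have "representative_set V (\<lambda>_. {1..s}) (R1 \<union> {x \<in> R2. fst x \<in> B})"
    unfolding parts(1) by (intro representative_set_glue[OF rep1 rep2 parts(2)]) auto
  moreover have "set (xs1 @ filter (\<lambda>x. fst x \<in> B) xs2) = R1 \<union> {x \<in> R2. fst x \<in> B}"
    using set1 set2 by auto
  ultimately show ?thesis
    unfolding dp_F_coloring_iff_degenerate_order
    by (intro conjI exI[of _ "xs1 @ filter (\<lambda>x. fst x \<in> B) xs2"])
qed

section \<open>Minimal counterexamples\<close>

lemma smaller_than_minimal_counterexample_extendable:
  assumes "extension_problem V' E' \<gamma>' C0' s' H' f' R0'" "card V' < card V"
    and minimal: "\<And>V' E' \<gamma>' C0' s' H' f' R0'.
        counterexample V' E' \<gamma>' C0' s' H' f' R0' \<Longrightarrow> card V \<le> card V'"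
  shows "\<exists>R. dp_F_coloring V' (\<lambda>_. {1..s'}) H' f' R \<and> R0' \<subseteq> R"
proof (rule ccontr)
  assume "\<not> ?thesis"
  then have "card V \<le> card V'"
    using assms(1) minimal unfolding counterexample_iff_not_extendable by blast
  then show False
    using assms(2) by simp
qed

lemma minimal_counterexample_no_triangle_cut_with_precoloured_side:
  assumes ce: "counterexample V E \<gamma> C0 s H f R0"
    and minimal: "\<And>V' E' \<gamma>' C0' s' H' f' R0'.
        counterexample V' E' \<gamma>' C0' s' H' f' R0' \<Longrightarrow> card V \<le> card V'"
    and C: "is_cycle V E [c1, c2, c3]"
    and parts: "V = {c1, c2, c3} \<union> A \<union> B" "A \<inter> B = {}" "{c1, c2, c3} \<inter> A = {}"
      "{c1, c2, c3} \<inter> B = {}"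
    and nonempty: "A \<noteq> {}" "B \<noteq> {}"
    and C0: "set C0 \<subseteq> {c1, c2, c3} \<union> A"
    and no_edges: "\<And>u w. u \<in> A \<Longrightarrow> w \<in> B \<Longrightarrow> {u, w} \<notin> E"
  shows False
proof -
  let ?T = "{c1, c2, c3}"
  have prob: "extension_problem V E \<gamma> C0 s H f R0"
    and not_extendable: "\<nexists>R. dp_F_coloring V (\<lambda>_. {1..s}) H f R \<and> R0 \<subseteq> R"
    using ce unfolding counterexample_iff_not_extendable by blast+
  have smaller: "\<exists>R. dp_F_coloring V' (\<lambda>_. {1..s'}) H' f' R \<and> R0' \<subseteq> R"
    if "extension_problem V' E' \<gamma>' C0' s' H' f' R0'" "card V' < card V" for V' E' \<gamma>' C0' s' H' f' R0'
    by (rule smaller_than_minimal_counterexample_extendable[OF that]) (rule minimal)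
  have "finite V"
    using extension_problemD(1)[OF prob] unfolding plane_graph_def by blast
  have distinct: "c1 \<noteq> c2" "c1 \<noteq> c3" "c2 \<noteq> c3"
    using C unfolding is_cycle_def by auto
  have "card (?T \<union> A) < card V"
    using nonempty(2) parts by (intro psubset_card_mono \<open>finite V\<close>) auto
  moreover have "extension_problem (?T \<union> A) (induced_edges E (?T \<union> A)) \<gamma> C0 s
      (restrict_cover H (?T \<union> A)) f R0"
    using C0 parts(1) by (intro extension_problem_induced[OF prob]) auto
  ultimately obtain R1 where R1: "dp_F_coloring (?T \<union> A) (\<lambda>_. {1..s}) (restrict_cover H (?T \<union> A)) f R1"
      "R0 \<subseteq> R1"
    using smaller by blast
  then have "\<forall>v\<in>?T. \<exists>c. (v, c) \<in> R1 \<and> c \<in> {1..s}"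
    unfolding dp_F_coloring_def representative_set_def by blast
  then obtain a1 a2 a3 where a: "{(c1, a1), (c2, a2), (c3, a3)} \<subseteq> R1"
      and colours: "a1 \<in> {1..s}" "a2 \<in> {1..s}" "a3 \<in> {1..s}"
    by auto
  have "card (?T \<union> B) < card V"
    using nonempty(1) parts by (intro psubset_card_mono \<open>finite V\<close>) auto
  moreover have "extension_problem (?T \<union> B) (induced_edges E (?T \<union> B)) \<gamma> [c1, c2, c3] (s + 1)
      (triangle_path_cover H (?T \<union> B) (\<lambda>_. {1..s + 1}) (c1, a1) (c2, a2) (c3, a3))
      (triangle_weights f s ?T (c1, a1)) {(c1, a1), (c2, a2), (c3, a3)}"
    using parts(1) colours by (intro extension_problem_triangle_path_cover[OF prob C]) auto
  ultimately obtain R2 where R2: "dp_F_coloring (?T \<union> B) (\<lambda>_. {1..s + 1})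
      (triangle_path_cover H (?T \<union> B) (\<lambda>_. {1..s + 1}) (c1, a1) (c2, a2) (c3, a3))
      (triangle_weights f s ?T (c1, a1)) R2" "{(c1, a1), (c2, a2), (c3, a3)} \<subseteq> R2"
    using smaller by blast
  have "V = (?T \<union> A) \<union> B" "(?T \<union> A) \<inter> B = {}" "?T \<subseteq> ?T \<union> A"
    using parts by auto
  then have "dp_F_coloring V (\<lambda>_. {1..s}) H f (R1 \<union> {x \<in> R2. fst x \<in> B})"
    using no_edges
    by (intro dp_F_coloring_glue_across_triangle[OF extension_problemD(6)[OF prob] distinct _ _ _ _ R1(1) a R2])
      auto
  moreover have "R0 \<subseteq> R1 \<union> {x \<in> R2. fst x \<in> B}"
    using R1(2) by (rule le_supI1)
  ultimately have "\<exists>R. dp_F_coloring V (\<lambda>_. {1..s}) H f R \<and> R0 \<subseteq> R"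
    by (intro exI conjI)
  then show False
    by (rule notE[OF not_extendable])
qed

lemma triangle_within_side:
  assumes "is_cycle V E C" "length C = 3" "V = T \<union> A \<union> B" "A \<inter> B = {}"
    and "\<And>u w. u \<in> A \<Longrightarrow> w \<in> B \<Longrightarrow> {u, w} \<notin> E"
  shows "set C \<subseteq> T \<union> A \<or> set C \<subseteq> T \<union> B"
proof (rule ccontr)
  assume "\<not> ?thesis"
  moreover have "set C \<subseteq> V"
    using assms(1) unfolding is_cycle_def by blast
  ultimately obtain u w where "u \<in> set C" "u \<in> A" "w \<in> set C" "w \<in> B"
    using assms(3) by blast
  moreover have "u \<noteq> w"
    using calculation assms(4) by blast
  ultimately show False
    using triangle_adjacent[OF assms(1,2)] assms(5) by blast
qed

lemma minimal_counterexample_no_triangle_cut: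
  assumes ce: "counterexample V E \<gamma> C0 s H f R0"
    and minimal: "\<And>V' E' \<gamma>' C0' s' H' f' R0'.
        counterexample V' E' \<gamma>' C0' s' H' f' R0' \<Longrightarrow> card V \<le> card V'"
    and C: "is_cycle V E [c1, c2, c3]"
    and parts: "V = {c1, c2, c3} \<union> A \<union> B" "A \<inter> B = {}" "{c1, c2, c3} \<inter> A = {}"
      "{c1, c2, c3} \<inter> B = {}"
    and nonempty: "A \<noteq> {}" "B \<noteq> {}"
    and no_edges: "\<And>u w. u \<in> A \<Longrightarrow> w \<in> B \<Longrightarrow> {u, w} \<notin> E"
  shows False
proof -
  have prob: "extension_problem V E \<gamma> C0 s H f R0"
    using ce unfolding counterexample_iff_not_extendable by blast
  have "set C0 \<subseteq> {c1, c2, c3} \<union> A \<or> set C0 \<subseteq> {c1, c2, c3} \<union> B"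
    by (rule triangle_within_side[OF extension_problemD(3,4)[OF prob] parts(1,2) no_edges])
  then show False
  proof
    assume C0: "set C0 \<subseteq> {c1, c2, c3} \<union> A"
    show False
      by (rule minimal_counterexample_no_triangle_cut_with_precoloured_side[OF ce _ C parts nonempty C0
            no_edges]) (rule minimal)
  next
    assume C0: "set C0 \<subseteq> {c1, c2, c3} \<union> B"
    have swapped: "V = {c1, c2, c3} \<union> B \<union> A" "B \<inter> A = {}"
      using parts by blast+
    have swapped_edges: "{w, u} \<notin> E" if "w \<in> B" "u \<in> A" for w u
      using no_edges[OF that(2,1)] by (simp add: insert_commute)
    show False
      by (rule minimal_counterexample_no_triangle_cut_with_precoloured_side[OF ce _ C swapped
            parts(4,3) nonempty(2,1) C0 swapped_edges]) (rule minimal)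
  qed
qed

lemma separating_cycle_partition:
  assumes "plane_graph V E \<gamma>" "is_cycle V E C"
  defines "K \<equiv> cycle_curve \<gamma> C"
  shows "V = set C \<union> (V \<inter> inside K) \<union> (V \<inter> outside K)" "(V \<inter> inside K) \<inter> (V \<inter> outside K) = {}"
    "set C \<inter> (V \<inter> inside K) = {}" "set C \<inter> (V \<inter> outside K) = {}"
  using cycle_curve_vertices[OF assms(1,2)] inside_Un_outside[of K] inside_Int_outside[of K]
  unfolding K_def by blast+

theorem lemma6:
  fixes V :: "complex set" and E :: "complex set set" and \<gamma> :: "complex set \<Rightarrow> real \<Rightarrow> complex"
    and C0 :: "complex list" and s :: nat and H :: "complex \<times> nat \<Rightarrow> complex \<times> nat \<Rightarrow> bool"
    and f :: "nat \<Rightarrow> complex \<Rightarrow> nat" and R0 :: "(complex \<times> nat) set"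
  assumes ce: "counterexample V E \<gamma> C0 s H f R0"
    and minimal: "\<And>V' E' \<gamma>' C0' s' H' f' R0'.
        counterexample V' E' \<gamma>' C0' s' H' f' R0' \<Longrightarrow> card V \<le> card V'"
  shows "\<not> (\<exists>C. is_cycle V E C \<and> length C = 3 \<and> separating_cycle V \<gamma> C)"
proof
  assume "\<exists>C. is_cycle V E C \<and> length C = 3 \<and> separating_cycle V \<gamma> C"
  then obtain c1 c2 c3 where C: "is_cycle V E [c1, c2, c3]"
      and separating: "separating_cycle V \<gamma> [c1, c2, c3]"
    by (auto simp: numeral_3_eq_3 length_Suc_conv)
  let ?K = "cycle_curve \<gamma> [c1, c2, c3]"
  have plane: "plane_graph V E \<gamma>"
    using ce unfolding counterexample_iff_not_extendable extension_problem_def by blast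
  show False
  proof (rule minimal_counterexample_no_triangle_cut[OF ce _ C])
    show "V = {c1, c2, c3} \<union> V \<inter> inside ?K \<union> V \<inter> outside ?K"
      "V \<inter> inside ?K \<inter> (V \<inter> outside ?K) = {}"
      "{c1, c2, c3} \<inter> (V \<inter> inside ?K) = {}" "{c1, c2, c3} \<inter> (V \<inter> outside ?K) = {}"
      using separating_cycle_partition[OF plane C] by simp_all
    show "V \<inter> inside ?K \<noteq> {}" "V \<inter> outside ?K \<noteq> {}"
      using separating unfolding separating_cycle_def by blast+
    show "{u, w} \<notin> E" if "u \<in> V \<inter> inside ?K" "w \<in> V \<inter> outside ?K" for u w
      using plane_graph_no_edge_across_cycle[OF plane C] that by blast
  qed (rule minimal)
qed

end
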